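(* Let $\mathbf{A}\in\mathbb{R}^{n\times d}$ have full column rank, $k\in[d]$ with $2k\le d$, and $\alpha\ge1$. Define $T:=\lceil\sqrt{\log(d/(2k))/\alpha}\rceil$ and $k_t:=\max\{\lceil d\exp(-\alpha t^2)\rceil,2k\}$ for all $t\in\{0,1,\dots,T\}$. Then for all $p\in[1,100]$, $\eta\in(0,1)$, and $t\in[T]$, $$k_{t-1}^p\sqrt{\frac{\overline{\Sigma}_{k_t}(\mathbf{A})}{\sigma_d(\mathbf{A})^2}}\exp(\alpha t)=O\Big(d^p\,\bar\kappa_{k,p^{-1}+\eta}(\mathbf{A})\exp\Big(\alpha\Big(p(c_p^2-1)+\frac{c_p^2}{\eta}\Big)\Big)\Big),\quad\text{where } c_p:=1+\frac{1}{2p},$$ and the constant in $O(\cdot)$ is absolute (independent of $\mathbf{A},d,k,\alpha,p,\eta,t$).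
   Context: $n\ge d$; $\sigma_1(\mathbf{A})\ge\cdots\ge\sigma_d(\mathbf{A})>0$ are the singular values of $\mathbf{A}$; $\overline{\Sigma}_k(\mathbf{A}):=\frac1k\sum_{i>k}\sigma_i(\mathbf{A})^2$; for $q\in(0,\infty)$, $\bar\kappa_{k,q}(\mathbf{A}):=\big(\frac{1}{d-k}\sum_{i>k}\sigma_i(\mathbf{A})^q/\sigma_d(\mathbf{A})^q\big)^{1/q}$; $\log$ is the natural logarithm. *)

theory Defs
  imports "Jordan_Normal_Form.DL_Rank" "Jordan_Normal_Form.Char_Poly"
    "HOL-Computational_Algebra.Polynomial" "HOL-Library.Multiset"
begin

text \<open>Singular values of a real matrix A (of dimension n x d): the square roots of the
  eigenvalues (with algebraic multiplicity) of the Gram matrix A^T A, listed in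
  non-increasing order.  sigma A i is the i-th singular value, 1-indexed.\<close>
definition sing_vals :: "real mat \<Rightarrow> real list" where
  "sing_vals A = map sqrt (rev (sorted_list_of_multiset
      (proots (char_poly (transpose_mat A * A)))))"

definition sigma :: "real mat \<Rightarrow> nat \<Rightarrow> real" where
  "sigma A i = sing_vals A ! (i - 1)"

definition full_col_rank :: "real mat \<Rightarrow> bool" where
  "full_col_rank A \<longleftrightarrow> vec_space.rank (dim_row A) A = dim_col A"

definition SigmaBar :: "nat \<Rightarrow> real mat \<Rightarrow> real" where
  "SigmaBar k A = (1 / real k) * (\<Sum>i\<in>{k<..dim_col A}. (sigma A i)\<^sup>2)"

definition kappaBar :: "nat \<Rightarrow> real \<Rightarrow> real mat \<Rightarrow> real" where
  "kappaBar k q A = ((1 / real (dim_col A - k)) *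
     (\<Sum>i\<in>{k<..dim_col A}. (sigma A i) powr q / (sigma A (dim_col A)) powr q)) powr (1 / q)"

definition Tpar :: "nat \<Rightarrow> nat \<Rightarrow> real \<Rightarrow> nat" where
  "Tpar d k \<alpha> = nat \<lceil>sqrt (ln (real d / (2 * real k)) / \<alpha>)\<rceil>"

definition kseq :: "nat \<Rightarrow> nat \<Rightarrow> real \<Rightarrow> nat \<Rightarrow> nat" where
  "kseq d k \<alpha> t = max (nat \<lceil>real d * exp (- \<alpha> * (real t)\<^sup>2)\<rceil>) (2 * k)"

end

theory Submission
  imports Defs
begin

text \<open>Write x_i = sigma_i / sigma_d (so x_i >= 1 for i > k) and S = sum_{i>k} x_i^q. As x is
  non-increasing, (i - k) x_i^q <= S, hence x_i <= M := (2S/m)^(1/q) whenever i > m >= 2k; the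
  interpolation x_i^2 <= x_i^q M^(2-q), valid for q <= 2, then gives
  SigmaBar_m / sigma_d^2 <= M^2 = (2(d-k)/m)^(2/q) kappaBar_{k,q}^2.
  With m = k_t >= d exp(-alpha t^2), q = 1/p + eta, and k_{t-1} <= 2d exp(-alpha (t-1)^2)
  (because t - 1 < sqrt(log(d/2k)/alpha)), the left-hand side is at most
  2^(p+1/q) d^p kappaBar_{k,q} exp(alpha (-p (t-1)^2 + t^2/q + t)), and the maximum over t of
  this concave quadratic exponent is exactly p (c_p^2 - 1) + c_p^2 / eta.\<close>

lemma conjugate_mult_mat_vec_of_real:
  fixes A :: "real mat" and v :: "complex vec"
  assumes "A \<in> carrier_mat n d" and "v \<in> carrier_vec d"
  shows "conjugate (map_mat complex_of_real A *\<^sub>v v) = map_mat complex_of_real A *\<^sub>v conjugate v"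
  using assms by (intro eq_vecI) (auto simp: scalar_prod_def sum_conjugate conjugate_dist_mul)

text \<open>The order on \<^typ>\<open>complex\<close> is that of \<^theory>\<open>HOL-Library.Complex_Order\<close>:
  \<open>a \<ge> 0\<close> says that \<open>a\<close> is a nonnegative real.\<close>

lemma eigenvalue_gram_nonneg:
  fixes A :: "real mat"
  assumes A: "A \<in> carrier_mat n d"
    and ev: "eigenvalue (map_mat complex_of_real (transpose_mat A * A)) a"
  shows "a \<ge> 0"
proof -
  define B where "B = map_mat complex_of_real A"
  have B: "B \<in> carrier_mat n d" using A unfolding B_def by simp
  have gram: "map_mat complex_of_real (transpose_mat A * A) = transpose_mat B * B"
    unfolding B_def using A by (simp add: of_real_hom.mat_hom_mult map_mat_transpose)
  obtain v where v: "v \<in> carrier_vec d" "v \<noteq> 0\<^sub>v d" "(transpose_mat B * B) *\<^sub>v v = a \<cdot>\<^sub>v v"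
    using ev B unfolding gram eigenvalue_def eigenvector_def by auto
  define w where "w = B *\<^sub>v v"
  have "a * (v \<bullet>c v) = ((transpose_mat B * B) *\<^sub>v v) \<bullet>c v"
    using v by simp
  also have "\<dots> = (transpose_mat B *\<^sub>v w) \<bullet> conjugate v"
    unfolding w_def using B v(1) by (simp add: assoc_mult_mat_vec)
  also have "\<dots> = w \<bullet>c w"
    unfolding w_def using B v(1)
    by (simp add: transpose_vec_mult_scalar conjugate_mult_mat_vec_of_real[OF A v(1), folded B_def])
  finally have eq: "a * (v \<bullet>c v) = w \<bullet>c w" .
  have "v \<bullet>c v > 0" using v by simp
  then have "a = (w \<bullet>c w) / (v \<bullet>c v)"
    using eq by (auto simp: eq_divide_eq)
  moreover have "w \<bullet>c w \<ge> 0" by blast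
  ultimately show "a \<ge> 0" using \<open>v \<bullet>c v > 0\<close>
    by (auto simp: less_eq_complex_def less_complex_def Re_divide Im_divide)
qed

lemma proots_prod_list_linear:
  "proots (\<Prod>r\<leftarrow>rs. [:- r, 1:]) = mset (rs :: 'a :: idom list)"
proof (induction rs)
  case (Cons r rs)
  have "(\<Prod>r\<leftarrow>rs. [:- r, 1:]) \<noteq> 0" by (auto simp: prod_list_zero_iff)
  then have "proots ([:- r, 1:] * (\<Prod>r\<leftarrow>rs. [:- r, 1:])) = proots [:- r, 1:] + mset rs"
    using Cons by (subst proots_mult) auto
  then show ?case by simp
qed simp

lemma char_poly_gram_nonneg_roots:
  fixes A :: "real mat"
  assumes A: "A \<in> carrier_mat n d"
  obtains rs where "length rs = d" "\<forall>r\<in>set rs. 0 \<le> r"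
    "char_poly (transpose_mat A * A) = (\<Prod>r\<leftarrow>rs. [:- r, 1:])"
proof -
  let ?M = "transpose_mat A * A"
  let ?Mc = "map_mat complex_of_real ?M"
  have M: "?M \<in> carrier_mat d d" and Mc: "?Mc \<in> carrier_mat d d" using A by auto
  obtain as where as: "char_poly ?Mc = (\<Prod>a\<leftarrow>as. [:- a, 1:])" "length as = d"
    using char_poly_factorized[OF Mc] by blast
  have as_nonneg: "a \<ge> 0" if "a \<in> set as" for a
  proof (rule eigenvalue_gram_nonneg[OF A])
    have "poly (char_poly ?Mc) a = 0"
      unfolding as(1) poly_prod_list_zero_iff using that by auto
    then show "eigenvalue ?Mc a" using eigenvalue_root_char_poly[OF Mc] by simp
  qed
  define rs where "rs = map Re as"
  have as_rs: "as = map complex_of_real rs"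
    unfolding rs_def using as_nonneg
    by (auto simp: less_eq_complex_def complex_eq_iff intro!: nth_equalityI)
  interpret of_real_poly: map_poly_inj_comm_ring_hom complex_of_real ..
  have "map_poly complex_of_real (char_poly ?M) = map_poly complex_of_real (\<Prod>r\<leftarrow>rs. [:- r, 1:])"
    using as(1) unfolding of_real_hom.char_poly_hom[OF M] as_rs of_real_poly.hom_prod_list
    by (simp add: o_def)
  then have "char_poly ?M = (\<Prod>r\<leftarrow>rs. [:- r, 1:])"
    by (rule of_real_poly.injectivity)
  moreover have "length rs = d" "\<forall>r\<in>set rs. 0 \<le> r"
    using as(2) as_nonneg unfolding rs_def by (auto simp: less_eq_complex_def)
  ultimately show thesis using that by blast
qed

lemma sing_vals_gram:
  fixes A :: "real mat"
  assumes A: "A \<in> carrier_mat n d"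
  shows "length (sing_vals A) = d" "\<forall>s\<in>set (sing_vals A). 0 \<le> s"
    "sorted_wrt (\<ge>) (sing_vals A)"
proof -
  obtain rs where rs: "length rs = d" "\<forall>r\<in>set rs. 0 \<le> r"
    "char_poly (transpose_mat A * A) = (\<Prod>r\<leftarrow>rs. [:- r, 1:])"
    using char_poly_gram_nonneg_roots[OF A] .
  have sv: "sing_vals A = map sqrt (rev (sort rs))"
    unfolding sing_vals_def rs(3) proots_prod_list_linear by simp
  show "length (sing_vals A) = d" "\<forall>s\<in>set (sing_vals A). 0 \<le> s"
    using rs(1,2) unfolding sv by auto
  show "sorted_wrt (\<ge>) (sing_vals A)"
    unfolding sv sorted_wrt_map sorted_wrt_rev
    by (rule sorted_wrt_mono_rel[OF _ sorted_sort]) simp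
qed

lemma sigma_nonneg:
  assumes "A \<in> carrier_mat n d" "1 \<le> i" "i \<le> d"
  shows "0 \<le> sigma A i"
  using sing_vals_gram[OF assms(1)] assms(2,3) unfolding sigma_def by auto

lemma sigma_antimono:
  assumes "A \<in> carrier_mat n d" "1 \<le> i" "i \<le> j" "j \<le> d"
  shows "sigma A j \<le> sigma A i"
  using sing_vals_gram[OF assms(1)] assms(2-4)
    sorted_wrt_nth_less[of "(\<ge>)" "sing_vals A" "i - 1" "j - 1"]
  unfolding sigma_def by (cases "i = j") auto

lemma antimono_powr_le_sum:
  fixes x :: "nat \<Rightarrow> real"
  assumes anti: "\<And>i j. k < i \<Longrightarrow> i \<le> j \<Longrightarrow> j \<le> d \<Longrightarrow> x j \<le> x i"
    and nonneg: "\<And>i. k < i \<Longrightarrow> i \<le> d \<Longrightarrow> 0 \<le> x i"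
    and q: "0 \<le> q" and i: "k < i" "i \<le> d"
  shows "real (i - k) * x i powr q \<le> (\<Sum>j\<in>{k<..d}. x j powr q)"
proof -
  have "real (i - k) * x i powr q = (\<Sum>j\<in>{k<..i}. x i powr q)" by simp
  also have "\<dots> \<le> (\<Sum>j\<in>{k<..i}. x j powr q)"
    using anti nonneg i q by (intro sum_mono powr_mono2) auto
  also have "\<dots> \<le> (\<Sum>j\<in>{k<..d}. x j powr q)"
    using i by (intro sum_mono2) auto
  finally show ?thesis .
qed

lemma antimono_tail_sum_square_le:
  fixes x :: "nat \<Rightarrow> real"
  assumes anti: "\<And>i j. k < i \<Longrightarrow> i \<le> j \<Longrightarrow> j \<le> d \<Longrightarrow> x j \<le> x i"
    and pos: "\<And>i. k < i \<Longrightarrow> i \<le> d \<Longrightarrow> 0 < x i"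
    and q: "0 < q" "q \<le> 2" and k: "1 \<le> k" and m: "2 * k \<le> m" "m \<le> d"
  shows "(\<Sum>i\<in>{m<..d}. (x i)\<^sup>2) / real m \<le> (2 * (\<Sum>i\<in>{k<..d}. x i powr q) / real m) powr (2 / q)"
proof -
  define S where "S = (\<Sum>i\<in>{k<..d}. x i powr q)"
  define M where "M = (2 * S / real m) powr (1 / q)"
  have m0: "real m > 0" using k m by simp
  have "0 < x d powr q" using pos[of d] k m by simp
  also have "x d powr q \<le> S"
    unfolding S_def using k m by (intro member_le_sum) auto
  finally have S0: "S > 0" .
  have M0: "M > 0" and Mq: "M powr q = 2 * S / real m"
    unfolding M_def using S0 m0 q by (auto simp: powr_powr)
  have x_le_M: "x i \<le> M" if i: "m < i" "i \<le> d" for i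
  proof -
    have "real m / 2 * x i powr q \<le> real (i - k) * x i powr q"
      using i m by (intro mult_right_mono) auto
    also have "\<dots> \<le> S"
      unfolding S_def using anti pos q i k m by (intro antimono_powr_le_sum) (auto intro: less_imp_le)
    finally have "x i powr q \<le> M powr q"
      unfolding Mq using m0 by (simp add: field_simps)
    then show ?thesis
      using powr_less_mono2[of q M "x i"] M0 q by fastforce
  qed
  have "(\<Sum>i\<in>{m<..d}. (x i)\<^sup>2) \<le> (\<Sum>i\<in>{m<..d}. x i powr q * M powr (2 - q))"
  proof (intro sum_mono)
    fix i assume i: "i \<in> {m<..d}"
    have xi: "x i > 0" using pos i m by auto
    have "(x i)\<^sup>2 = x i powr q * x i powr (2 - q)"
      using xi by (simp add: powr_add[symmetric] powr_realpow)
    also have "\<dots> \<le> x i powr q * M powr (2 - q)"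
      using xi x_le_M i q by (intro mult_left_mono powr_mono2) auto
    finally show "(x i)\<^sup>2 \<le> x i powr q * M powr (2 - q)" .
  qed
  also have "\<dots> \<le> S * M powr (2 - q)"
    unfolding S_def sum_distrib_right[symmetric] using m
    by (intro mult_right_mono sum_mono2) auto
  finally have "(\<Sum>i\<in>{m<..d}. (x i)\<^sup>2) / real m \<le> M powr q * M powr (2 - q) / 2"
    unfolding Mq using m0 by (simp add: field_simps)
  also have "\<dots> \<le> M powr 2"
    using M0 by (simp add: powr_add[symmetric])
  also have "M powr 2 = (2 * S / real m) powr (2 / q)"
    unfolding M_def using S0 m0 by (simp add: powr_powr)
  finally show ?thesis unfolding S_def .
qed

lemma sqrt_SigmaBar_le_kappaBar:
  fixes A :: "real mat"
  assumes A: "A \<in> carrier_mat n d" and sd: "sigma A d > 0"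
    and q: "0 < q" "q \<le> 2" and k: "1 \<le> k" and m: "2 * k \<le> m" "m \<le> d"
  shows "sqrt (SigmaBar m A / (sigma A d)\<^sup>2)
    \<le> (2 * real (d - k) / real m) powr (1 / q) * kappaBar k q A"
proof -
  define x where "x i = sigma A i / sigma A d" for i
  define S where "S = (\<Sum>i\<in>{k<..d}. x i powr q)"
  have x_ge_1: "1 \<le> x i" if "k < i" "i \<le> d" for i
    unfolding x_def using sigma_antimono[OF A, of i d] that sd by simp
  have "(\<Sum>i\<in>{m<..d}. (x i)\<^sup>2) / real m \<le> (2 * S / real m) powr (2 / q)"
    unfolding S_def
  proof (rule antimono_tail_sum_square_le[OF _ _ q k m])
    show "x j \<le> x i" if "k < i" "i \<le> j" "j \<le> d" for i j
      unfolding x_def using sigma_antimono[OF A, of i j] that sd k by (simp add: divide_right_mono)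
  qed (use x_ge_1 in fastforce)
  moreover have "SigmaBar m A / (sigma A d)\<^sup>2 = (\<Sum>i\<in>{m<..d}. (x i)\<^sup>2) / real m"
    using A unfolding SigmaBar_def x_def by (simp add: sum_divide_distrib power_divide mult.commute)
  ultimately have "sqrt (SigmaBar m A / (sigma A d)\<^sup>2) \<le> sqrt ((2 * S / real m) powr (2 / q))"
    by simp
  also have "\<dots> = (2 * S / real m) powr (1 / q)"
    by (simp add: powr_half_sqrt[symmetric] powr_powr)
  also have "\<dots> = (2 * real (d - k) / real m) powr (1 / q) * (S / real (d - k)) powr (1 / q)"
  proof -
    have "real (d - k) > 0" "real m > 0" using k m by simp_all
    then have "2 * S / real m = (2 * real (d - k) / real m) * (S / real (d - k))"
      by (simp add: field_simps)
    then show ?thesis by (simp only: powr_mult)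
  qed
  also have "S = (\<Sum>i\<in>{k<..d}. sigma A i powr q / sigma A d powr q)"
    unfolding S_def x_def using sigma_nonneg[OF A] sd k
    by (intro sum.cong) (auto simp: powr_divide)
  finally show ?thesis
    using A unfolding kappaBar_def by simp
qed

lemma kseq_le:
  assumes "2 * k \<le> d" and "0 \<le> \<alpha>"
  shows "kseq d k \<alpha> t \<le> d"
proof -
  have "real d * exp (- \<alpha> * (real t)\<^sup>2) \<le> real d"
    using assms(2) by (simp add: mult_left_le)
  then show ?thesis
    unfolding kseq_def using assms(1) by (simp add: nat_le_iff ceiling_le_iff)
qed

lemma real_le_kseq_mult_exp: "real d \<le> real (kseq d k \<alpha> t) * exp (\<alpha> * (real t)\<^sup>2)"
proof -
  have "real d * exp (- \<alpha> * (real t)\<^sup>2) \<le> real (kseq d k \<alpha> t)"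
    unfolding kseq_def by linarith
  then have "real d * exp (- \<alpha> * (real t)\<^sup>2) * exp (\<alpha> * (real t)\<^sup>2)
      \<le> real (kseq d k \<alpha> t) * exp (\<alpha> * (real t)\<^sup>2)"
    by (simp add: mult_right_mono)
  then show ?thesis by (simp add: mult.assoc exp_add[symmetric])
qed

lemma kseq_pred_le:
  assumes k: "1 \<le> k" "2 * k \<le> d" and \<alpha>: "0 < \<alpha>" and t: "1 \<le> t" "t \<le> Tpar d k \<alpha>"
  shows "real (kseq d k \<alpha> (t - 1)) \<le> 2 * real d * exp (- \<alpha> * (real t - 1)\<^sup>2)"
proof -
  define L where "L = ln (real d / (2 * real k))"
  define y where "y = real d * exp (- \<alpha> * (real t - 1)\<^sup>2)"
  have L0: "L \<ge> 0" unfolding L_def using k by simp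
  have "real t \<le> real (nat \<lceil>sqrt (L / \<alpha>)\<rceil>)"
    using t(2) unfolding Tpar_def L_def by simp
  also have "\<dots> = of_int \<lceil>sqrt (L / \<alpha>)\<rceil>"
    using L0 \<alpha> by simp
  also have "\<dots> < sqrt (L / \<alpha>) + 1" by linarith
  finally have "real t < sqrt (L / \<alpha>) + 1" .
  then have "(real t - 1)\<^sup>2 \<le> (sqrt (L / \<alpha>))\<^sup>2"
    using t(1) by (intro power_mono) auto
  then have "\<alpha> * (real t - 1)\<^sup>2 \<le> L"
    using L0 \<alpha> by (simp add: field_simps)
  then have "exp (- L) \<le> exp (- \<alpha> * (real t - 1)\<^sup>2)" by simp
  moreover have "exp (- L) = 2 * real k / real d"
    unfolding L_def using k by (simp add: exp_minus)
  ultimately have y: "2 * real k \<le> y"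
    unfolding y_def using k by (simp add: field_simps)
  have "real (nat \<lceil>y\<rceil>) \<le> 2 * y" "real (2 * k) \<le> 2 * y" using y k by linarith+
  moreover have "real (t - 1) = real t - 1" using t(1) by simp
  ultimately show ?thesis unfolding kseq_def y_def by simp
qed

lemma quadratic_exponent_le:
  fixes p \<eta> t :: real
  assumes p: "p \<ge> 1" and \<eta>: "\<eta> > 0"
  shows "- p * (t - 1)\<^sup>2 + t\<^sup>2 / (1 / p + \<eta>) + t
    \<le> p * ((1 + 1 / (2 * p))\<^sup>2 - 1) + (1 + 1 / (2 * p))\<^sup>2 / \<eta>"
proof -
  define a where "a = p\<^sup>2 * \<eta> / (1 + p * \<eta>)"
  define b where "b = 2 * p + 1"
  have p\<eta>: "1 + p * \<eta> > 0" using p \<eta> by (simp add: add_pos_pos)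
  have a: "a > 0" unfolding a_def using p \<eta> p\<eta> by simp
  have "- p * (t - 1)\<^sup>2 + t\<^sup>2 / (1 / p + \<eta>) + t = - a * t\<^sup>2 + b * t - p"
    unfolding a_def b_def using p \<eta> p\<eta> by (simp add: field_simps power2_eq_square)
  also have "\<dots> = b\<^sup>2 / (4 * a) - p - (2 * a * t - b)\<^sup>2 / (4 * a)"
    using a by (simp add: field_simps power2_eq_square)
  also have "\<dots> \<le> b\<^sup>2 / (4 * a) - p"
    using a by simp
  also have "\<dots> = p * ((1 + 1 / (2 * p))\<^sup>2 - 1) + (1 + 1 / (2 * p))\<^sup>2 / \<eta>"
    unfolding a_def b_def using p \<eta> p\<eta> by (simp add: field_simps power2_eq_square)
  finally show ?thesis .
qed

lemma kseq_pred_powr_le: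
  assumes "1 \<le> k" "2 * k \<le> d" "0 < \<alpha>" "1 \<le> t" "t \<le> Tpar d k \<alpha>" and p: "0 \<le> p"
  shows "real (kseq d k \<alpha> (t - 1)) powr p
    \<le> (2 * real d) powr p * exp (- \<alpha> * p * (real t - 1)\<^sup>2)"
proof -
  have "real (kseq d k \<alpha> (t - 1)) powr p \<le> (2 * real d * exp (- \<alpha> * (real t - 1)\<^sup>2)) powr p"
    using kseq_pred_le[OF assms(1-5)] p by (intro powr_mono2) auto
  also have "\<dots> = (2 * real d) powr p * exp (- \<alpha> * p * (real t - 1)\<^sup>2)"
    by (simp add: powr_mult exp_powr_real mult_ac)
  finally show ?thesis .
qed

lemma sqrt_SigmaBar_kseq_le:
  fixes A :: "real mat"
  assumes A: "A \<in> carrier_mat n d" and sd: "sigma A d > 0"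
    and k: "1 \<le> k" "2 * k \<le> d" and \<alpha>: "0 \<le> \<alpha>" and q: "0 < q" "q \<le> 2"
  shows "sqrt (SigmaBar (kseq d k \<alpha> t) A / (sigma A d)\<^sup>2)
    \<le> 2 powr (1 / q) * exp (\<alpha> * (real t)\<^sup>2 / q) * kappaBar k q A"
proof -
  define m where "m = kseq d k \<alpha> t"
  have m: "2 * k \<le> m" "m \<le> d" "real m > 0"
    unfolding m_def using kseq_le[OF k(2) \<alpha>] k by (auto simp: kseq_def)
  have "sqrt (SigmaBar m A / (sigma A d)\<^sup>2) \<le> (2 * real (d - k) / real m) powr (1 / q) * kappaBar k q A"
    by (rule sqrt_SigmaBar_le_kappaBar[OF A sd q k(1) m(1,2)])
  also have "\<dots> \<le> (2 * exp (\<alpha> * (real t)\<^sup>2)) powr (1 / q) * kappaBar k q A"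
  proof (intro mult_right_mono powr_mono2)
    have "real (d - k) \<le> real m * exp (\<alpha> * (real t)\<^sup>2)"
      using real_le_kseq_mult_exp[of d k \<alpha> t] unfolding m_def[symmetric] by linarith
    then show "2 * real (d - k) / real m \<le> 2 * exp (\<alpha> * (real t)\<^sup>2)"
      using m(3) by (simp add: field_simps)
  qed (use q m(3) in \<open>auto simp: kappaBar_def\<close>)
  also have "\<dots> = 2 powr (1 / q) * exp (\<alpha> * (real t)\<^sup>2 / q) * kappaBar k q A"
    by (simp add: powr_mult exp_powr_real)
  finally show ?thesis unfolding m_def .
qed

lemma kseq_SigmaBar_product_le:
  fixes A :: "real mat"
  assumes A: "A \<in> carrier_mat n d" and sd: "sigma A d > 0"
    and k: "1 \<le> k" "2 * k \<le> d" and \<alpha>: "0 < \<alpha>" and t: "1 \<le> t" "t \<le> Tpar d k \<alpha>"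
    and p: "0 \<le> p" and q: "0 < q" "q \<le> 2"
  shows "real (kseq d k \<alpha> (t - 1)) powr p * sqrt (SigmaBar (kseq d k \<alpha> t) A / (sigma A d)\<^sup>2)
      * exp (\<alpha> * real t)
    \<le> 2 powr (p + 1 / q) * (real d powr p * kappaBar k q A)
      * exp (\<alpha> * (- p * (real t - 1)\<^sup>2 + (real t)\<^sup>2 / q + real t))"
proof -
  have "real (kseq d k \<alpha> (t - 1)) powr p * sqrt (SigmaBar (kseq d k \<alpha> t) A / (sigma A d)\<^sup>2)
      * exp (\<alpha> * real t)
    \<le> ((2 * real d) powr p * exp (- \<alpha> * p * (real t - 1)\<^sup>2))
      * (2 powr (1 / q) * exp (\<alpha> * (real t)\<^sup>2 / q) * kappaBar k q A) * exp (\<alpha> * real t)"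
    using kseq_pred_powr_le[OF k \<alpha> t p] sqrt_SigmaBar_kseq_le[OF A sd k _ q, of \<alpha> t] \<alpha>
    by (intro mult_right_mono mult_mono) (auto simp: SigmaBar_def sum_nonneg)
  also have "\<dots> = 2 powr (p + 1 / q) * (real d powr p * kappaBar k q A)
      * exp (\<alpha> * (- p * (real t - 1)\<^sup>2 + (real t)\<^sup>2 / q + real t))"
    by (simp add: powr_mult powr_add exp_add[symmetric] algebra_simps)
  finally show ?thesis .
qed

lemma kseq_SigmaBar_bound:
  fixes A :: "real mat"
  assumes A: "A \<in> carrier_mat n d" and k: "1 \<le> k" "2 * k \<le> d" and \<alpha>: "0 < \<alpha>"
    and p: "1 \<le> p" "p \<le> 100" and \<eta>: "0 < \<eta>" "\<eta> < 1" and t: "1 \<le> t" "t \<le> Tpar d k \<alpha>"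
  shows "real (kseq d k \<alpha> (t - 1)) powr p * sqrt (SigmaBar (kseq d k \<alpha> t) A / (sigma A d)\<^sup>2)
      * exp (\<alpha> * real t)
    \<le> 2 powr 200 * (real d powr p * kappaBar k (1 / p + \<eta>) A
      * exp (\<alpha> * (p * ((1 + 1 / (2 * p))\<^sup>2 - 1) + (1 + 1 / (2 * p))\<^sup>2 / \<eta>)))"
proof (cases "sigma A d = 0")
  case True
  then show ?thesis by (simp add: kappaBar_def)
next
  case False
  then have sd: "sigma A d > 0" using sigma_nonneg[OF A, of d] k by simp
  define q where "q = 1 / p + \<eta>"
  have "0 < 1 / p" "1 / p \<le> 1" using p by auto
  then have q: "0 < q" "q \<le> 2" using \<eta> unfolding q_def by linarith+
  have "1 \<le> p * q" unfolding q_def using p \<eta> by (simp add: algebra_simps)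
  then have "1 / q \<le> p" using q by (simp add: divide_le_eq mult.commute)
  then have const: "2 powr (p + 1 / q) \<le> 2 powr 200" using p by (intro powr_mono) auto
  have exponent: "- p * (real t - 1)\<^sup>2 + (real t)\<^sup>2 / q + real t
      \<le> p * ((1 + 1 / (2 * p))\<^sup>2 - 1) + (1 + 1 / (2 * p))\<^sup>2 / \<eta>"
    unfolding q_def by (rule quadratic_exponent_le[OF p(1) \<eta>(1)])
  have "real (kseq d k \<alpha> (t - 1)) powr p * sqrt (SigmaBar (kseq d k \<alpha> t) A / (sigma A d)\<^sup>2)
      * exp (\<alpha> * real t)
    \<le> 2 powr (p + 1 / q) * (real d powr p * kappaBar k q A)
      * exp (\<alpha> * (- p * (real t - 1)\<^sup>2 + (real t)\<^sup>2 / q + real t))"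
    using p by (intro kseq_SigmaBar_product_le[OF A sd k \<alpha> t _ q]) auto
  also have "\<dots> \<le> 2 powr 200 * (real d powr p * kappaBar k q A)
      * exp (\<alpha> * (p * ((1 + 1 / (2 * p))\<^sup>2 - 1) + (1 + 1 / (2 * p))\<^sup>2 / \<eta>))"
    using const exponent \<alpha> by (intro mult_mono) (auto simp: kappaBar_def)
  finally show ?thesis unfolding q_def by (simp add: mult.assoc)
qed

theorem lemma4p12:
  "\<exists>C::real. \<forall>(n::nat) (d::nat) (A::real mat) (k::nat) (\<alpha>::real) (p::real) (\<eta>::real) (t::nat).
     A \<in> carrier_mat n d \<and> n \<ge> d \<and> full_col_rank A \<and>
     1 \<le> k \<and> k \<le> d \<and> 2 * k \<le> d \<and> \<alpha> \<ge> 1 \<and>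
     1 \<le> p \<and> p \<le> 100 \<and> 0 < \<eta> \<and> \<eta> < 1 \<and>
     1 \<le> t \<and> t \<le> Tpar d k \<alpha>
     \<longrightarrow>
     (let c = 1 + 1 / (2 * p) in
       (real (kseq d k \<alpha> (t - 1))) powr p
         * sqrt (SigmaBar (kseq d k \<alpha> t) A / (sigma A d)\<^sup>2) * exp (\<alpha> * real t)
       \<le> C * ((real d) powr p * kappaBar k (1 / p + \<eta>) A
              * exp (\<alpha> * (p * (c\<^sup>2 - 1) + c\<^sup>2 / \<eta>))))"
  unfolding Let_def
  by (intro exI[of _ "2 powr 200"] allI impI kseq_SigmaBar_bound) auto

end
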